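(* Let $T\in\mathcal L(\mathcal H)$ be invertible and $C>0$. Let $\mathcal X$ be the set of $x\in\mathcal H$ for which there exist strictly increasing sequences $\{n_k\}_k$ and $\{l_k\}_k$ of positive integers such that the limits $\lim_k\|T^{-l_k}x\|$ and $\lim_k\|T^{n_k}x\|$ exist and $\lim_k\|T^{-l_k}x\|\leq C\lim_k\|T^{n_k}x\|$. If $\mathcal X$ is dense in $\mathcal H$, then $$\sup_{n\geq0}\|T^{-n}\|\leq C\Bigl(\sup_{n\geq0}\|T^n\|\Bigr)^2 .$$
   Context: $\mathcal H$ is a complex Hilbert space. *)

theory Defs
  imports "HOL-Analysis.Analysis" "HOL-Library.Extended_Real"
begin

text \<open>A complex Hilbert space is modelled as a real Hilbert space (a complete real
inner product space) equipped with a complex structure J (multiplication by the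
imaginary unit): J is real-linear, J (J x) = - x, and J is orthogonal. The complex
inner product is then  inner x y + i * inner x (J y)  (up to convention), and the norm
is the same as the real norm.\<close>

definition complex_structure :: "('a::real_inner \<Rightarrow> 'a) \<Rightarrow> bool" where
  "complex_structure J \<longleftrightarrow> linear J \<and> (\<forall>x. J (J x) = - x) \<and> (\<forall>x y. inner (J x) (J y) = inner x y)"

definition bounded_op :: "('a::real_inner \<Rightarrow> 'a) \<Rightarrow> ('a \<Rightarrow> 'a) \<Rightarrow> bool" where
  "bounded_op J T \<longleftrightarrow> bounded_linear T \<and> (\<forall>x. T (J x) = J (T x))"

end

theory Submission
  imports Defs
begin

text \<open>If \<open>sup\<^sub>n \<parallel>T\<^sup>n\<parallel> = M\<close> is finite, then for every \<open>m \<le> l\<close> we have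
\<open>S\<^sup>m x = T\<^bsup>l-m\<^esup> S\<^sup>l x\<close>, hence \<open>\<parallel>S\<^sup>m x\<parallel> \<le> M \<parallel>S\<^sup>l x\<parallel>\<close>; letting \<open>l\<close> run
through \<open>l\<^sub>k\<close> gives \<open>\<parallel>S\<^sup>m x\<parallel> \<le> M lim \<parallel>S\<^bsup>l\<^sub>k\<^esup> x\<parallel> \<le> C M lim \<parallel>T\<^bsup>n\<^sub>k\<^esup> x\<parallel> \<le> C M\<^sup>2 \<parallel>x\<parallel>\<close>
for every \<open>x\<close> in the dense set. Since \<open>S\<^sup>m\<close> is continuous, the bound extends to all
of \<open>\<H>\<close>.\<close>

lemma bounded_linear_funpow:
  fixes f :: "'a::real_normed_vector \<Rightarrow> 'a"
  assumes "bounded_linear f"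
  shows "bounded_linear (f ^^ n)"
proof (induction n)
  case 0
  then show ?case using bounded_linear_ident by (simp add: id_def)
next
  case (Suc n)
  then show ?case by (simp add: bounded_linear_compose assms)
qed

lemma funpow_right_inverse:
  fixes T S :: "'a \<Rightarrow> 'a"
  assumes "T \<circ> S = id"
  shows "(T ^^ n) ((S ^^ n) x) = x"
proof (induction n arbitrary: x)
  case 0
  then show ?case by simp
next
  case (Suc n)
  have "(T ^^ Suc n) ((S ^^ Suc n) x) = T ((T ^^ n) ((S ^^ n) (S x)))"
    by (simp only: funpow.simps(2) comp_apply funpow_swap1)
  also have "\<dots> = x"
    using Suc assms by (metis comp_apply id_apply)
  finally show ?case .
qed

lemma funpow_right_inverse_diff:
  fixes T S :: "'a \<Rightarrow> 'a"
  assumes "T \<circ> S = id" and "m \<le> l"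
  shows "(T ^^ (l - m)) ((S ^^ l) x) = (S ^^ m) x"
proof -
  have "(S ^^ l) x = (S ^^ (l - m)) ((S ^^ m) x)"
    using assms(2) by (metis funpow_add le_add_diff_inverse2 comp_apply)
  then show ?thesis
    using funpow_right_inverse[OF assms(1)] by simp
qed

lemma SUP_onorm_funpow_nonneg:
  fixes T :: "'a::real_normed_vector \<Rightarrow> 'a"
  assumes "bounded_linear T"
  shows "0 \<le> (SUP n. ereal (onorm (T ^^ n)))"
proof -
  have "ereal (onorm (T ^^ 0)) \<le> (SUP n. ereal (onorm (T ^^ n)))"
    by (rule SUP_upper) simp
  moreover have "0 \<le> onorm (T ^^ 0)"
    using onorm_pos_le[OF bounded_linear_funpow[OF assms]] .
  ultimately show ?thesis
    by (metis order_trans ereal_less_eq(5))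
qed

lemma norm_funpow_le_SUP_onorm:
  fixes T :: "'a::real_normed_vector \<Rightarrow> 'a"
  assumes "bounded_linear T" and "(SUP n. ereal (onorm (T ^^ n))) = ereal M"
  shows "norm ((T ^^ n) y) \<le> M * norm y"
proof -
  have "ereal (onorm (T ^^ n)) \<le> ereal M"
    unfolding assms(2)[symmetric] by (rule SUP_upper) simp
  then have "onorm (T ^^ n) \<le> M" by simp
  then show ?thesis
    by (metis assms(1) bounded_linear_funpow onorm mult_right_mono norm_ge_zero order_trans)
qed

lemma norm_funpow_le_lim_norm_inverse_orbit:
  fixes T S :: "'a::real_normed_vector \<Rightarrow> 'a"
  assumes TS: "T \<circ> S = id"
    and power_bounded: "\<And>n y. norm ((T ^^ n) y) \<le> M * norm y"
    and l: "strict_mono l"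
    and lim: "(\<lambda>k. norm ((S ^^ l k) x)) \<longlonglongrightarrow> a"
  shows "norm ((S ^^ m) x) \<le> M * a"
proof (rule LIMSEQ_le_const)
  show "(\<lambda>k. M * norm ((S ^^ l k) x)) \<longlonglongrightarrow> M * a"
    by (intro tendsto_mult tendsto_const lim)
  have "norm ((S ^^ m) x) \<le> M * norm ((S ^^ l k) x)" if "m \<le> k" for k
  proof -
    have "m \<le> l k" using seq_suble[OF l, of k] that by linarith
    then have "(S ^^ m) x = (T ^^ (l k - m)) ((S ^^ l k) x)"
      using funpow_right_inverse_diff[OF TS] by simp
    then show ?thesis using power_bounded by simp
  qed
  then show "\<exists>N. \<forall>k\<ge>N. norm ((S ^^ m) x) \<le> M * norm ((S ^^ l k) x)"
    by blast
qed

lemma norm_funpow_inverse_le_of_orbit_limits: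
  fixes T S :: "'a::real_normed_vector \<Rightarrow> 'a"
  assumes TS: "T \<circ> S = id"
    and power_bounded: "\<And>n y. norm ((T ^^ n) y) \<le> M * norm y"
    and "0 \<le> M" and "0 \<le> C"
    and l: "strict_mono l"
    and conv_S: "convergent (\<lambda>k. norm ((S ^^ l k) x))"
    and conv_T: "convergent (\<lambda>k. norm ((T ^^ n k) x))"
    and lim_le: "lim (\<lambda>k. norm ((S ^^ l k) x)) \<le> C * lim (\<lambda>k. norm ((T ^^ n k) x))"
  shows "norm ((S ^^ m) x) \<le> C * M\<^sup>2 * norm x"
proof -
  define a where "a = lim (\<lambda>k. norm ((S ^^ l k) x))"
  define b where "b = lim (\<lambda>k. norm ((T ^^ n k) x))"
  have "(\<lambda>k. norm ((S ^^ l k) x)) \<longlonglongrightarrow> a"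
    using conv_S unfolding a_def by (simp add: convergent_LIMSEQ_iff)
  then have "norm ((S ^^ m) x) \<le> M * a"
    by (rule norm_funpow_le_lim_norm_inverse_orbit[OF TS power_bounded l])
  also have "\<dots> \<le> M * (C * b)"
    using lim_le \<open>0 \<le> M\<close> unfolding a_def b_def by (rule mult_left_mono)
  also have "b \<le> M * norm x"
  proof (rule LIMSEQ_le_const2)
    show "(\<lambda>k. norm ((T ^^ n k) x)) \<longlonglongrightarrow> b"
      using conv_T unfolding b_def by (simp add: convergent_LIMSEQ_iff)
  qed (use power_bounded in auto)
  then have "M * (C * b) \<le> M * (C * (M * norm x))"
    using \<open>0 \<le> M\<close> \<open>0 \<le> C\<close> by (intro mult_left_mono) auto
  finally show ?thesis
    by (simp add: power2_eq_square algebra_simps)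
qed

lemma norm_le_of_dense:
  fixes f :: "'a::real_normed_vector \<Rightarrow> 'b::real_normed_vector"
  assumes "bounded_linear f" and "closure D = UNIV"
    and "\<And>x. x \<in> D \<Longrightarrow> norm (f x) \<le> K * norm x"
  shows "norm (f x) \<le> K * norm x"
proof -
  have "closure D \<subseteq> {x. norm (f x) \<le> K * norm x}"
  proof (rule closure_minimal)
    show "closed {x. norm (f x) \<le> K * norm x}"
      by (intro closed_Collect_le continuous_intros linear_continuous_on
            bounded_linear.continuous_on assms(1))
  qed (use assms(3) in blast)
  then show ?thesis using assms(2) by auto
qed

theorem proposition4p4:
  fixes J T S :: "'a::{real_inner, complete_space} \<Rightarrow> 'a" and C :: real
  assumes J: "complex_structure J"
    and T: "bounded_op J T"
    and S: "bounded_op J S" and ST: "S \<circ> T = id" and TS: "T \<circ> S = id"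
    and C: "C > 0"
    and dense: "closure {x. \<exists>n l :: nat \<Rightarrow> nat.
                   strict_mono n \<and> strict_mono l \<and> (\<forall>k. 0 < n k \<and> 0 < l k) \<and>
                   convergent (\<lambda>k. norm ((S ^^ l k) x)) \<and>
                   convergent (\<lambda>k. norm ((T ^^ n k) x)) \<and>
                   lim (\<lambda>k. norm ((S ^^ l k) x)) \<le> C * lim (\<lambda>k. norm ((T ^^ n k) x))} = UNIV"
  shows "(SUP n. ereal (onorm (S ^^ n))) \<le> ereal C * (SUP n. ereal (onorm (T ^^ n))) ^ 2"
proof -
  have blT: "bounded_linear T" and blS: "bounded_linear S"
    using T S by (auto simp: bounded_op_def)
  define \<Sigma> where "\<Sigma> = (SUP n. ereal (onorm (T ^^ n)))"
  have "0 \<le> \<Sigma>" unfolding \<Sigma>_def using blT by (rule SUP_onorm_funpow_nonneg)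
  then consider (infinite) "\<Sigma> = \<infinity>" | (finite) M where "\<Sigma> = ereal M" "0 \<le> M"
    by (cases \<Sigma>) auto
  then show ?thesis
  proof cases
    case infinite
    then show ?thesis using C by (simp add: \<Sigma>_def[symmetric] power2_eq_square)
  next
    case (finite M)
    have power_bounded: "norm ((T ^^ n) y) \<le> M * norm y" for n y
      using norm_funpow_le_SUP_onorm[OF blT] finite(1) unfolding \<Sigma>_def by blast
    have "norm ((S ^^ m) x) \<le> C * M\<^sup>2 * norm x" for m x
      using bounded_linear_funpow[OF blS] dense
      by (rule norm_le_of_dense)
        (auto intro: norm_funpow_inverse_le_of_orbit_limits[OF TS power_bounded]
           simp: finite(2) less_imp_le[OF C])
    then have "onorm (S ^^ m) \<le> C * M\<^sup>2" for m
      using C finite(2) by (intro onorm_bound) auto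
    then have "(SUP n. ereal (onorm (S ^^ n))) \<le> ereal (C * M\<^sup>2)"
      by (intro SUP_least) simp
    also have "\<dots> = ereal C * \<Sigma> ^ 2"
      using finite(1) by (simp add: power2_eq_square)
    finally show ?thesis unfolding \<Sigma>_def .
  qed
qed

end
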